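(* Let $p$ be a prime, let $n,m$ be positive integers, let $F:\mathbb{F}_{p^n}\to\mathbb{F}_{p^m}$ be a function and let $\theta>0$. Let $G_F=\{(x,F(x)) : x\in\mathbb{F}_{p^n}\}\subseteq H=\mathbb{F}_{p^n}\times\mathbb{F}_{p^m}$ (additive group). Then $G_F$ is a partial geometric difference set in $H$ with parameters $(p^{n+m},p^n;\alpha,\beta)$ for some constants $\alpha,\beta$ with $\beta-\alpha=\theta$ if and only if $|\widehat{F_b}(a)|\in\{0,\sqrt{\theta}\}$ for all $b\in\mathbb{F}_{p^m}^*$ and all $a\in\mathbb{F}_{p^n}$. Moreover, in this case $\theta=p^{n+s}$ for some integer $0\le s\le n$, and $\alpha=p^{2n-m}-p^{n+s-m}$, $\beta=p^{n+s}+p^{2n-m}-p^{n+s-m}$.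
   Context: $\zeta_p=e^{2\pi i/p}$ and $Tr_n(z)=\sum_{i=0}^{n-1}z^{p^i}$ is the absolute trace of $\mathbb{F}_{p^n}$ (similarly $Tr_m$). For $b\in\mathbb{F}_{p^m}^*$ the component function is $F_b(x)=Tr_m(bF(x))$, and its Walsh transform is $\widehat{F_b}(a)=\sum_{x\in\mathbb{F}_{p^n}}\zeta_p^{F_b(x)-Tr_n(ax)}$ for $a\in\mathbb{F}_{p^n}$. Partial geometric difference set: let $G$ be an abelian group of order $v$ (written additively) and $S\subseteq G$ with $|S|=k$, where $v>k>2$. For $g\in G$ let $\delta(g)=|\{(s,t)\in S\times S: g=s-t\}|$. $S$ is a partial geometric difference set (PGDS) with parameters $(v,k;\alpha,\beta)$ if for every $x\in G$, $\sum_{y\in S}\delta(x-y)=\alpha$ when $x\notin S$ and $=\beta$ when $x\in S$. *)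

theory Defs
  imports "HOL-Analysis.Analysis" "HOL-Library.Product_Plus"
begin

definition zeta :: "nat \<Rightarrow> complex" where
  "zeta p = exp (2 * pi * \<i> / of_nat p)"

definition abs_trace :: "nat \<Rightarrow> nat \<Rightarrow> 'a::field \<Rightarrow> 'a" where
  "abs_trace p n z = (\<Sum>i<n. z ^ (p ^ i))"

definition fp_val :: "nat \<Rightarrow> 'a::field \<Rightarrow> nat" where
  "fp_val p t = (THE k. k < p \<and> of_nat k = t)"

(* Walsh transform of the component function F_b(x) = Tr_m(b F(x)) at a *)
definition walsh ::
  "nat \<Rightarrow> nat \<Rightarrow> nat \<Rightarrow> ('a::{field,finite} \<Rightarrow> 'b::{field,finite}) \<Rightarrow> 'b \<Rightarrow> 'a \<Rightarrow> complex" where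
  "walsh p n m F b a =
     (\<Sum>x\<in>(UNIV::'a set).
        zeta p powi (int (fp_val p (abs_trace p m (b * F x))) - int (fp_val p (abs_trace p n (a * x)))))"

definition delta :: "'g::ab_group_add set \<Rightarrow> 'g \<Rightarrow> nat" where
  "delta S g = card {(s, t). s \<in> S \<and> t \<in> S \<and> g = s - t}"

definition pgds :: "'g::ab_group_add set \<Rightarrow> nat \<Rightarrow> nat \<Rightarrow> nat \<Rightarrow> nat \<Rightarrow> bool" where
  "pgds S v k \<alpha> \<beta> \<longleftrightarrow>
     finite (UNIV :: 'g set) \<and> card (UNIV :: 'g set) = v \<and> card S = k \<and> v > k \<and> k > 2 \<and>
     (\<forall>x. (x \<notin> S \<longrightarrow> (\<Sum>y\<in>S. delta S (x - y)) = \<alpha>) \<and>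
          (x \<in> S \<longrightarrow> (\<Sum>y\<in>S. delta S (x - y)) = \<beta>))"

definition graph_set :: "('a \<Rightarrow> 'b) \<Rightarrow> ('a \<times> 'b) set" where
  "graph_set F = {(x, F x) | x. True}"

end

theory Submission
  imports Defs "HOL-Number_Theory.Cong" "HOL-Computational_Algebra.Polynomial"
    "HOL-Computational_Algebra.Primes" "HOL-Library.Real_Mod"
begin

(*
  For the graph G of F let N(g) = (sum of delta(g - y) over y in G), so that G is a PGDS with
  beta - alpha = theta exactly when N = alpha + theta * 1_G.  In terms of the characters chi_k of
  F_{p^n} x F_{p^m}, the Fourier transform of N is T |T|^2, where T is the transform of G; by
  Fourier inversion, N has the required form iff T(k) (|T(k)|^2 - theta) = 0 for all k \<noteq> 0.
  For k = (a, 0) with a \<noteq> 0 the transform T(k) vanishes, and for b \<noteq> 0 the value T(a, b) is the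
  Walsh coefficient of F_b at -a; this is the equivalence.  Parseval along the line b = 1 shows
  that theta times the number of a with T(a, 1) \<noteq> 0 equals p^(2n), so theta = p^(n+s) with
  0 \<le> s \<le> n, and the identity at k = 0, namely p^(3n) = alpha p^(n+m) + theta p^n, determines alpha.
*)

section \<open>Finite fields\<close>

lemma of_nat_card_eq_0: "(of_nat CARD('c::{ring_1,finite}) :: 'c) = 0"
proof -
  have "(\<Sum>x\<in>(UNIV::'c set). x + 1) = (\<Sum>x\<in>UNIV. x)"
    by (rule sum.reindex_bij_witness[of _ "\<lambda>y. y - 1" "\<lambda>y. y + 1"]) auto
  then show ?thesis
    by (simp add: sum.distrib)
qed

lemma CHAR_eq_prime_of_card:
  assumes "prime p" and "CARD('c::{field,finite}) = p ^ n"
  shows "CHAR('c) = p"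
proof -
  have "prime CHAR('c)"
    by (intro prime_CHAR_semidom finite_imp_CHAR_pos) simp
  moreover have "CHAR('c) dvd p ^ n"
    using of_nat_card_eq_0[where 'c = 'c] assms(2) of_nat_eq_0_iff_char_dvd by metis
  ultimately show ?thesis
    using assms(1) prime_dvd_power primes_dvd_imp_eq by blast
qed

lemma power_card_eq_self:
  fixes x :: "'c::{field,finite}"
  shows "x ^ CARD('c) = x"
proof (cases "x = 0")
  case False
  let ?U = "UNIV - {0} :: 'c set"
  have "x ^ card ?U * (\<Prod>y\<in>?U. y) = (\<Prod>y\<in>?U. x * y)"
    by (simp add: prod.distrib)
  also have "\<dots> = (\<Prod>y\<in>?U. y)"
    by (rule prod.reindex_bij_witness[of _ "\<lambda>y. y / x" "\<lambda>y. x * y"]) (use False in auto)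
  finally have "x ^ card ?U = 1"
    by simp
  have "CARD('c) = Suc (card ?U)"
    by (simp add: card_Diff_singleton finite_UNIV_card_ge_0)
  then have "x ^ CARD('c) = x * x ^ card ?U"
    by (simp only: power_Suc)
  also have "\<dots> = x"
    using \<open>x ^ card ?U = 1\<close> by simp
  finally show ?thesis .
qed (simp add: finite_UNIV_card_ge_0)

lemma of_nat_power_CHAR:
  assumes "prime CHAR('c::comm_semiring_1)"
  shows "(of_nat k :: 'c) ^ CHAR('c) = of_nat k"
proof -
  have "(\<Sum>i<k. 1 :: 'c) ^ CHAR('c) = (\<Sum>i<k. 1 ^ CHAR('c))"
    by (rule freshmans_dream_sum) (use assms in auto)
  then show ?thesis
    by simp
qed

lemma frobenius_fixed_imp_of_nat:
  fixes t :: "'c::field"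
  assumes "prime CHAR('c)" and "t ^ CHAR('c) = t"
  shows "\<exists>k. t = of_nat k"
proof -
  let ?p = "CHAR('c)"
  \<comment> \<open>The \<open>p\<close> elements of the prime field already exhaust the at most \<open>p\<close> roots of \<open>X ^ p - X\<close>.\<close>
  define q :: "'c poly" where "q = monom 1 ?p - [:0, 1:]"
  have "?p > 1"
    using assms(1) prime_gt_1_nat by blast
  then have "coeff q ?p = 1" and "degree q \<le> ?p"
    by (auto simp: q_def coeff_monom coeff_pCons degree_monom_eq split: nat.split
        intro!: degree_diff_le)
  then have roots_bound: "card {x. poly q x = 0} \<le> ?p"
    using card_poly_roots_bound[of q] by fastforce
  have roots: "poly q x = 0 \<longleftrightarrow> x ^ ?p = x" for x
    by (simp add: q_def poly_monom)
  have "inj_on (of_nat :: nat \<Rightarrow> 'c) {..<?p}"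
    by (intro inj_onI) (simp add: of_nat_eq_iff_cong_CHAR cong_def)
  then have "card (of_nat ` {..<?p} :: 'c set) = ?p"
    by (simp add: card_image)
  moreover have "of_nat ` {..<?p} \<subseteq> {x :: 'c. poly q x = 0}"
    using of_nat_power_CHAR[OF assms(1)] by (auto simp: roots)
  moreover have "finite {x :: 'c. poly q x = 0}"
    using \<open>coeff q ?p = 1\<close> by (intro poly_roots_finite) auto
  ultimately have "of_nat ` {..<?p} = {x :: 'c. poly q x = 0}"
    using roots_bound by (intro card_seteq) auto
  then show ?thesis
    using assms(2) by (auto simp: roots)
qed

lemma fp_val_of_nat:
  assumes "CHAR('c::field) = p" and "p > 0"
  shows "fp_val p (of_nat k :: 'c) = k mod p"
  unfolding fp_val_def
  by (rule the_equality) (auto simp: of_nat_eq_iff_cong_CHAR cong_def assms)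

lemma abs_trace_add:
  assumes "prime CHAR('c::field)" and "CHAR('c) = p"
  shows "abs_trace p n (x + y :: 'c) = abs_trace p n x + abs_trace p n y"
  using assms by (simp add: abs_trace_def freshmans_dream' sum.distrib)

lemma abs_trace_power_char:
  assumes "prime p" and "CARD('c::{field,finite}) = p ^ n"
  shows "abs_trace p n (x :: 'c) ^ p = abs_trace p n x"
proof -
  have char: "CHAR('c) = p"
    using CHAR_eq_prime_of_card[OF assms] .
  have "abs_trace p n x ^ p = (\<Sum>i<n. (x ^ p ^ i) ^ p)"
    unfolding abs_trace_def by (rule freshmans_dream_sum) (use assms char in auto)
  also have "\<dots> = (\<Sum>i<Suc n. x ^ p ^ i) - x"
    by (subst sum.lessThan_Suc_shift) (simp add: power_mult[symmetric] mult.commute)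
  also have "\<dots> = abs_trace p n x + x ^ p ^ n - x"
    by (simp add: abs_trace_def)
  also have "x ^ p ^ n = x"
    using power_card_eq_self[of x] assms(2) by simp
  finally show ?thesis
    by simp
qed

lemma abs_trace_of_nat:
  assumes "prime p" and "CARD('c::{field,finite}) = p ^ n"
  obtains k where "abs_trace p n (x :: 'c) = of_nat k"
  using frobenius_fixed_imp_of_nat[of "abs_trace p n x"] abs_trace_power_char[OF assms]
    CHAR_eq_prime_of_card[OF assms] assms(1) by auto

lemma abs_trace_nonzero_exists:
  assumes "prime p" and "CARD('c::{field,finite}) = p ^ n" and "n > 0"
  shows "\<exists>w :: 'c. abs_trace p n w \<noteq> 0"
proof -
  \<comment> \<open>The trace is a nonzero polynomial function of degree \<open>p ^ (n - 1) < p ^ n\<close>.\<close>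
  define r :: "'c poly" where "r = (\<Sum>i<n. monom 1 (p ^ i))"
  have "p > 1"
    using assms(1) prime_gt_1_nat by blast
  have "coeff r (p ^ (n - 1)) = (\<Sum>i<n. if i = n - 1 then 1 else 0)"
    unfolding r_def coeff_sum coeff_monom using \<open>p > 1\<close>
    by (intro sum.cong refl) (simp add: power_inject_exp)
  then have "r \<noteq> 0"
    using assms(3) by auto
  have "degree r \<le> p ^ (n - 1)"
    unfolding r_def using \<open>p > 1\<close>
    by (intro degree_sum_le) (auto intro: order.trans[OF degree_monom_le] simp: power_increasing)
  also have "\<dots> < CARD('c)"
    using \<open>p > 1\<close> assms(2,3) by (simp add: power_strict_increasing)
  finally have "card {x. poly r x = 0} < CARD('c)"
    using card_poly_roots_bound[OF \<open>r \<noteq> 0\<close>] by linarith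
  then have "{x. poly r x = 0} \<noteq> UNIV"
    by auto
  moreover have "poly r x = abs_trace p n x" for x
    by (simp add: r_def abs_trace_def poly_sum poly_monom)
  ultimately show ?thesis
    by auto
qed

section \<open>Additive characters\<close>

lemma zeta_power: "zeta p ^ k = cis (2 * pi * real k / real p)"
proof -
  have "zeta p ^ k = cis (2 * pi / real p) ^ k"
    by (simp add: zeta_def cis_conv_exp mult.commute)
  also have "\<dots> = cis (real k * (2 * pi / real p))"
    by (rule Complex.DeMoivre)
  finally show ?thesis
    by (simp add: ac_simps)
qed

lemma norm_zeta_power [simp]: "cmod (zeta p ^ k) = 1"
  by (simp add: zeta_power)

lemma zeta_power_eq_1_iff:
  assumes "p > 0"
  shows "zeta p ^ k = 1 \<longleftrightarrow> p dvd k"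
proof -
  have "zeta p ^ k = 1 \<longleftrightarrow> (\<exists>j::int. 2 * pi * real k / real p = of_int j * (2 * pi))"
    by (simp add: zeta_power cis_eq_1_iff)
  also have "\<dots> \<longleftrightarrow> (\<exists>j::int. real k = real p * of_int j)"
    using assms by (simp add: field_simps)
  also have "\<dots> \<longleftrightarrow> (\<exists>j::int. int k = int p * j)"
    by (metis of_int_eq_iff of_int_mult of_int_of_nat_eq)
  also have "\<dots> \<longleftrightarrow> p dvd k"
    by (metis dvd_def int_dvd_int_iff)
  finally show ?thesis .
qed

lemma zeta_power_mod:
  assumes "p > 0"
  shows "zeta p ^ (k mod p) = zeta p ^ k"
proof -
  have "zeta p ^ k = (zeta p ^ p) ^ (k div p) * zeta p ^ (k mod p)"
    by (simp flip: power_mult power_add)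
  then show ?thesis
    using zeta_power_eq_1_iff[OF assms, of p] by simp
qed

definition nontrivial_add_char :: "('c::ab_group_add \<Rightarrow> complex) \<Rightarrow> bool" where
  "nontrivial_add_char \<psi> \<longleftrightarrow>
     (\<forall>x y. \<psi> (x + y) = \<psi> x * \<psi> y) \<and> (\<forall>x. cmod (\<psi> x) = 1) \<and> (\<exists>w. \<psi> w \<noteq> 1)"

lemma add_char_add:
  assumes "nontrivial_add_char \<psi>"
  shows "\<psi> (x + y) = \<psi> x * \<psi> y"
  using assms by (simp add: nontrivial_add_char_def)

lemma add_char_zero:
  assumes "nontrivial_add_char \<psi>"
  shows "\<psi> 0 = 1"
proof -
  have "\<psi> 0 * \<psi> 0 = \<psi> 0 * 1"
    using add_char_add[OF assms, of 0 0] by simp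
  moreover have "\<psi> 0 \<noteq> 0"
    using assms by (auto simp: nontrivial_add_char_def dest: spec[of _ 0])
  ultimately show ?thesis
    by (metis mult_left_cancel)
qed

lemma add_char_diff:
  assumes "nontrivial_add_char \<psi>"
  shows "\<psi> (x - y) = \<psi> x * cnj (\<psi> y)"
proof -
  have "\<psi> y * cnj (\<psi> y) = 1"
    using assms complex_norm_square[of "\<psi> y"] by (simp add: nontrivial_add_char_def)
  then have "\<psi> (x - y) = \<psi> (x - y) * (\<psi> y * cnj (\<psi> y))"
    by simp
  also have "\<dots> = \<psi> x * cnj (\<psi> y)"
    by (simp flip: mult.assoc add_char_add[OF assms])
  finally show ?thesis .
qed

lemma add_char_uminus:
  assumes "nontrivial_add_char \<psi>"
  shows "\<psi> (- x) = inverse (\<psi> x)"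
proof -
  have "\<psi> x * \<psi> (- x) = \<psi> (x + - x)"
    by (rule add_char_add[OF assms, symmetric])
  also have "\<dots> = 1"
    by (simp add: add_char_zero[OF assms])
  finally show ?thesis
    by (rule inverse_unique[symmetric])
qed

lemma sum_add_char:
  fixes \<psi> :: "'c::{ab_group_add,finite} \<Rightarrow> complex"
  assumes "nontrivial_add_char \<psi>"
  shows "(\<Sum>x\<in>UNIV. \<psi> x) = 0"
proof -
  obtain w where "\<psi> w \<noteq> 1"
    using assms by (auto simp: nontrivial_add_char_def)
  have "\<psi> w * (\<Sum>x\<in>UNIV. \<psi> x) = (\<Sum>x\<in>UNIV. \<psi> (w + x))"
    by (simp add: sum_distrib_left add_char_add[OF assms])
  also have "\<dots> = (\<Sum>x\<in>UNIV. \<psi> x)"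
    by (rule sum.reindex_bij_witness[of _ "\<lambda>y. y - w" "\<lambda>y. w + y"]) auto
  finally show ?thesis
    using \<open>\<psi> w \<noteq> 1\<close> by (metis mult_cancel_right1 mult.commute)
qed

lemma sum_add_char_mult:
  fixes \<psi> :: "'c::{field,finite} \<Rightarrow> complex"
  assumes "nontrivial_add_char \<psi>"
  shows "(\<Sum>x\<in>UNIV. \<psi> (c * x)) = (if c = 0 then of_nat CARD('c) else 0)"
proof (cases "c = 0")
  case False
  have "(\<Sum>x\<in>UNIV. \<psi> (c * x)) = (\<Sum>x\<in>UNIV. \<psi> x)"
    by (rule sum.reindex_bij_witness[of _ "\<lambda>y. y / c" "\<lambda>y. c * y"]) (use False in auto)
  then show ?thesis
    using sum_add_char[OF assms] False by simp
qed (simp add: add_char_zero[OF assms])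

definition canonical_add_char :: "nat \<Rightarrow> nat \<Rightarrow> 'c::field \<Rightarrow> complex" where
  "canonical_add_char p n x = zeta p ^ fp_val p (abs_trace p n x)"

lemma nontrivial_add_char_canonical:
  assumes "prime p" and "CARD('c::{field,finite}) = p ^ n" and "n > 0"
  shows "nontrivial_add_char (canonical_add_char p n :: 'c \<Rightarrow> complex)"
proof -
  have char: "CHAR('c) = p" and "p > 0"
    using CHAR_eq_prime_of_card[OF assms(1,2)] assms(1) prime_gt_0_nat by auto
  have trace_val: "canonical_add_char p n x = zeta p ^ k" if "abs_trace p n x = of_nat k"
    for x :: 'c and k
    using that by (simp add: canonical_add_char_def fp_val_of_nat[OF char \<open>p > 0\<close>]
        zeta_power_mod[OF \<open>p > 0\<close>])
  have "canonical_add_char p n (x + y) = canonical_add_char p n x * canonical_add_char p n y"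
    for x y :: 'c
  proof -
    obtain i where i: "abs_trace p n x = of_nat i"
      by (rule abs_trace_of_nat[OF assms(1,2)])
    obtain j where j: "abs_trace p n y = of_nat j"
      by (rule abs_trace_of_nat[OF assms(1,2)])
    have "abs_trace p n (x + y) = of_nat (i + j)"
      using abs_trace_add[of p n x y] assms(1) char i j by simp
    then show ?thesis
      using trace_val[OF i] trace_val[OF j] trace_val[of "x + y" "i + j"] by (simp add: power_add)
  qed
  moreover have "cmod (canonical_add_char p n x) = 1" for x :: 'c
    by (simp add: canonical_add_char_def)
  moreover have "\<exists>w::'c. canonical_add_char p n w \<noteq> 1"
  proof -
    obtain w :: 'c where w: "abs_trace p n w \<noteq> 0"
      using abs_trace_nonzero_exists[OF assms] by blast
    obtain k where k: "abs_trace p n w = of_nat k"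
      by (rule abs_trace_of_nat[OF assms(1,2)])
    with w have "\<not> p dvd k"
      by (simp add: of_nat_eq_0_iff_char_dvd char)
    then have "canonical_add_char p n w \<noteq> 1"
      by (simp add: trace_val[OF k] zeta_power_eq_1_iff[OF \<open>p > 0\<close>])
    then show ?thesis ..
  qed
  ultimately show ?thesis
    unfolding nontrivial_add_char_def by blast
qed

section \<open>Fourier analysis of partial geometric difference sets\<close>

definition pgds_count :: "'g::ab_group_add set \<Rightarrow> 'g \<Rightarrow> nat" where
  "pgds_count S x = (\<Sum>y\<in>S. delta S (x - y))"

lemma pgds_iff_pgds_count:
  fixes S :: "'g::{ab_group_add,finite} set"
  shows "pgds S v k \<alpha> \<beta> \<longleftrightarrow> CARD('g) = v \<and> card S = k \<and> k < v \<and> 2 < k \<and>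
    (\<forall>x. pgds_count S x = (if x \<in> S then \<beta> else \<alpha>))"
  unfolding pgds_def pgds_count_def by auto

lemma sum_mult_delta:
  fixes S :: "'g::{ab_group_add,finite} set" and f :: "'g \<Rightarrow> 'r::comm_semiring_1"
  shows "(\<Sum>g\<in>UNIV. f g * of_nat (delta S (g - x))) = (\<Sum>(y, z)\<in>S \<times> S. f (x + y - z))"
proof -
  let ?\<phi> = "\<lambda>(y, z). x + y - z"
  have fiber: "{q. q \<in> S \<times> S \<and> ?\<phi> q = g} = {(s, t). s \<in> S \<and> t \<in> S \<and> g - x = s - t}" for g
    by (auto simp: algebra_simps)
  have "(\<Sum>(y, z)\<in>S \<times> S. f (x + y - z)) = (\<Sum>q\<in>S \<times> S. f (?\<phi> q))"
    by (simp add: case_prod_beta)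
  also have "\<dots> = (\<Sum>g\<in>UNIV. \<Sum>q\<in>{q. q \<in> S \<times> S \<and> ?\<phi> q = g}. f (?\<phi> q))"
    by (rule sum.group[symmetric]) auto
  also have "\<dots> = (\<Sum>g\<in>UNIV. f g * of_nat (delta S (g - x)))"
  proof (rule sum.cong[OF refl])
    fix g
    have "(\<Sum>q\<in>{q. q \<in> S \<times> S \<and> ?\<phi> q = g}. f (?\<phi> q)) = (\<Sum>q\<in>{q. q \<in> S \<times> S \<and> ?\<phi> q = g}. f g)"
      by (rule sum.cong) auto
    then show "(\<Sum>q\<in>{q. q \<in> S \<times> S \<and> ?\<phi> q = g}. f (?\<phi> q)) = f g * of_nat (delta S (g - x))"
      by (simp add: fiber delta_def mult.commute)
  qed
  finally show ?thesis ..
qed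

lemma sum_pgds_count_mult:
  fixes S :: "'g::{ab_group_add,finite} set" and f :: "'g \<Rightarrow> 'r::comm_semiring_1"
  shows "(\<Sum>g\<in>UNIV. of_nat (pgds_count S g) * f g) = (\<Sum>x\<in>S. \<Sum>y\<in>S. \<Sum>z\<in>S. f (x + y - z))"
proof -
  have "(\<Sum>g\<in>UNIV. of_nat (pgds_count S g) * f g) = (\<Sum>x\<in>S. \<Sum>g\<in>UNIV. f g * of_nat (delta S (g - x)))"
    unfolding pgds_count_def of_nat_sum sum_distrib_right by (subst sum.swap) (simp add: mult.commute)
  then show ?thesis
    by (simp add: sum_mult_delta sum.cartesian_product)
qed

locale char_pair =
  fixes \<psi>\<^sub>1 :: "'a::{field,finite} \<Rightarrow> complex" and \<psi>\<^sub>2 :: "'b::{field,finite} \<Rightarrow> complex"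
  assumes char1: "nontrivial_add_char \<psi>\<^sub>1" and char2: "nontrivial_add_char \<psi>\<^sub>2"
begin

definition chi :: "'a \<times> 'b \<Rightarrow> 'a \<times> 'b \<Rightarrow> complex" where
  "chi k g = \<psi>\<^sub>1 (fst k * fst g) * \<psi>\<^sub>2 (snd k * snd g)"

definition transform :: "('a \<times> 'b) set \<Rightarrow> 'a \<times> 'b \<Rightarrow> complex" where
  "transform S k = (\<Sum>g\<in>S. chi k g)"

lemma chi_add: "chi k (g + h) = chi k g * chi k h"
  by (simp add: chi_def distrib_left add_char_add[OF char1] add_char_add[OF char2])

lemma chi_diff: "chi k (g - h) = chi k g * cnj (chi k h)"
  by (simp add: chi_def right_diff_distrib add_char_diff[OF char1] add_char_diff[OF char2])

lemma chi_commute: "chi k g = chi g k"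
  by (simp add: chi_def mult.commute)

lemma chi_zero: "chi 0 g = 1"
  by (simp add: chi_def add_char_zero[OF char1] add_char_zero[OF char2])

lemma sum_chi: "(\<Sum>g\<in>UNIV. chi k g) = (if k = 0 then of_nat (CARD('a) * CARD('b)) else 0)"
proof -
  have "(\<Sum>g\<in>UNIV. chi k g) = (\<Sum>u\<in>UNIV. \<Sum>v\<in>UNIV. chi k (u, v))"
    unfolding sum.cartesian_product by simp
  also have "\<dots> = (\<Sum>u\<in>UNIV. \<psi>\<^sub>1 (fst k * u)) * (\<Sum>v\<in>UNIV. \<psi>\<^sub>2 (snd k * v))"
    by (simp add: chi_def sum_product)
  finally have "(\<Sum>g\<in>UNIV. chi k g) = (\<Sum>u\<in>UNIV. \<psi>\<^sub>1 (fst k * u)) * (\<Sum>v\<in>UNIV. \<psi>\<^sub>2 (snd k * v))" .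
  then show ?thesis
    by (cases k) (simp add: sum_add_char_mult[OF char1] sum_add_char_mult[OF char2] zero_prod_def)
qed

lemma fourier_inversion:
  "(\<Sum>k\<in>UNIV. (\<Sum>h\<in>UNIV. f h * chi k h) * cnj (chi k g)) = of_nat (CARD('a) * CARD('b)) * f g"
proof -
  have "(\<Sum>k\<in>UNIV. (\<Sum>h\<in>UNIV. f h * chi k h) * cnj (chi k g))
      = (\<Sum>k\<in>UNIV. \<Sum>h\<in>UNIV. f h * chi k (h - g))"
    by (simp add: sum_distrib_right chi_diff mult.assoc)
  also have "\<dots> = (\<Sum>h\<in>UNIV. f h * (\<Sum>k\<in>UNIV. chi (h - g) k))"
    by (subst sum.swap) (simp add: sum_distrib_left chi_commute[of _ "_ - g"])
  also have "\<dots> = of_nat (CARD('a) * CARD('b)) * f g"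
    by (simp add: sum_chi if_distrib cong: if_cong)
  finally show ?thesis .
qed

lemma transform_zero: "transform S 0 = of_nat (card S)"
  by (simp add: transform_def chi_zero)

lemma transform_eq_sum_UNIV: "transform S k = (\<Sum>h\<in>UNIV. of_bool (h \<in> S) * chi k h)"
  by (simp add: transform_def sum.inter_filter[symmetric])

lemma sum_pgds_count_chi:
  "(\<Sum>g\<in>UNIV. of_nat (pgds_count S g) * chi k g) = transform S k * of_real ((cmod (transform S k))\<^sup>2)"
proof -
  let ?a = "chi k"
  have "transform S k * (transform S k * cnj (transform S k))
      = (\<Sum>x\<in>S. ?a x) * ((\<Sum>y\<in>S. ?a y) * (\<Sum>z\<in>S. cnj (?a z)))"
    by (simp add: transform_def cnj_sum)
  also have "\<dots> = (\<Sum>x\<in>S. \<Sum>y\<in>S. ?a x * (\<Sum>z\<in>S. ?a y * cnj (?a z)))"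
    by (simp only: sum_product)
  also have "\<dots> = (\<Sum>x\<in>S. \<Sum>y\<in>S. \<Sum>z\<in>S. ?a (x + y - z))"
    by (simp only: sum_distrib_left chi_add chi_diff mult.assoc)
  also have "\<dots> = (\<Sum>g\<in>UNIV. of_nat (pgds_count S g) * chi k g)"
    by (rule sum_pgds_count_mult[symmetric])
  finally show ?thesis
    by (simp only: complex_norm_square)
qed

lemma two_valued_pgds_count_imp_spectrum:
  assumes count: "\<forall>g. pgds_count S g = (if g \<in> S then \<beta> else \<alpha>)"
  shows "transform S k * of_real ((cmod (transform S k))\<^sup>2)
    = (if k = 0 then of_nat (\<alpha> * (CARD('a) * CARD('b))) else 0) + (of_nat \<beta> - of_nat \<alpha>) * transform S k"
proof -
  have count': "of_nat (pgds_count S g) = of_nat \<alpha> + (of_nat \<beta> - of_nat \<alpha>) * (of_bool (g \<in> S) :: complex)"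
    for g
    using count[rule_format, of g] by simp
  have "transform S k * of_real ((cmod (transform S k))\<^sup>2)
      = (\<Sum>g\<in>UNIV. of_nat \<alpha> * chi k g + (of_nat \<beta> - of_nat \<alpha>) * (of_bool (g \<in> S) * chi k g))"
    unfolding sum_pgds_count_chi[symmetric] by (rule sum.cong[OF refl]) (simp add: count' algebra_simps)
  also have "\<dots> = of_nat \<alpha> * (\<Sum>g\<in>UNIV. chi k g)
      + (of_nat \<beta> - of_nat \<alpha>) * (\<Sum>g\<in>UNIV. of_bool (g \<in> S) * chi k g)"
    by (simp only: sum.distrib sum_distrib_left)
  finally show ?thesis
    by (simp add: sum_chi flip: transform_eq_sum_UNIV)
qed

lemma spectrum_imp_pgds_count:
  assumes spectrum: "\<forall>k\<noteq>0. transform S k * of_real ((cmod (transform S k))\<^sup>2) = of_real \<theta> * transform S k"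
  shows "of_nat (CARD('a) * CARD('b)) * (of_nat (pgds_count S g) :: complex)
    = of_nat (CARD('a) * CARD('b)) * of_real \<theta> * of_bool (g \<in> S)
      + (of_nat (card S) ^ 3 - of_real \<theta> * of_nat (card S))"
proof -
  define c :: complex where "c = of_nat (card S) ^ 3 - of_real \<theta> * of_nat (card S)"
  have cube: "transform S k * of_real ((cmod (transform S k))\<^sup>2)
      = of_real \<theta> * transform S k + (if k = 0 then c else 0)" for k
  proof (cases "k = 0")
    case True
    then show ?thesis
      by (simp add: transform_zero c_def power3_eq_cube power2_eq_square)
  next
    case False
    then show ?thesis
      using spectrum[rule_format, OF False] by simp
  qed
  have "of_nat (CARD('a) * CARD('b)) * of_nat (pgds_count S g)
      = (\<Sum>k\<in>UNIV. (\<Sum>h\<in>UNIV. of_nat (pgds_count S h) * chi k h) * cnj (chi k g))"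
    by (rule fourier_inversion[symmetric])
  also have "\<dots> = (\<Sum>k\<in>UNIV. of_real \<theta> * (transform S k * cnj (chi k g)) + (if k = 0 then c else 0))"
    by (rule sum.cong[OF refl]) (simp only: sum_pgds_count_chi cube, simp add: algebra_simps chi_zero)
  also have "\<dots> = of_real \<theta> * (\<Sum>k\<in>UNIV. transform S k * cnj (chi k g)) + c"
    by (simp add: sum.distrib sum_distrib_left)
  also have "(\<Sum>k\<in>UNIV. transform S k * cnj (chi k g)) = of_nat (CARD('a) * CARD('b)) * of_bool (g \<in> S)"
    unfolding transform_eq_sum_UNIV by (rule fourier_inversion)
  finally show ?thesis
    unfolding c_def by (simp only: mult_ac)
qed

lemma two_valued_pgds_count_iff_spectrum:
  assumes "S \<noteq> {}" and "S \<noteq> UNIV"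
  shows "(\<exists>\<alpha> \<beta>. (\<forall>g. pgds_count S g = (if g \<in> S then \<beta> else \<alpha>)) \<and> real \<beta> - real \<alpha> = \<theta>)
    \<longleftrightarrow> (\<forall>k\<noteq>0. transform S k * of_real ((cmod (transform S k))\<^sup>2) = of_real \<theta> * transform S k)"
proof
  assume "\<exists>\<alpha> \<beta>. (\<forall>g. pgds_count S g = (if g \<in> S then \<beta> else \<alpha>)) \<and> real \<beta> - real \<alpha> = \<theta>"
  then obtain \<alpha> \<beta> where count: "\<forall>g. pgds_count S g = (if g \<in> S then \<beta> else \<alpha>)"
    and diff: "real \<beta> - real \<alpha> = \<theta>"
    by blast
  have "of_nat \<beta> - of_nat \<alpha> = (of_real \<theta> :: complex)"
    using arg_cong[OF diff, of complex_of_real] by simp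
  then show "\<forall>k\<noteq>0. transform S k * of_real ((cmod (transform S k))\<^sup>2) = of_real \<theta> * transform S k"
    using two_valued_pgds_count_imp_spectrum[OF count] by simp
next
  assume spectrum: "\<forall>k\<noteq>0. transform S k * of_real ((cmod (transform S k))\<^sup>2) = of_real \<theta> * transform S k"
  let ?V = "of_nat (CARD('a) * CARD('b)) :: complex"
  obtain g\<^sub>1 g\<^sub>0 where "g\<^sub>1 \<in> S" and "g\<^sub>0 \<notin> S"
    using assms by blast
  note count = spectrum_imp_pgds_count[OF spectrum]
  have "\<forall>g. pgds_count S g = (if g \<in> S then pgds_count S g\<^sub>1 else pgds_count S g\<^sub>0)"
  proof
    fix g
    have "?V * of_nat (pgds_count S g) = ?V * of_nat (if g \<in> S then pgds_count S g\<^sub>1 else pgds_count S g\<^sub>0)"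
      using count[of g] count[of g\<^sub>1] count[of g\<^sub>0] \<open>g\<^sub>1 \<in> S\<close> \<open>g\<^sub>0 \<notin> S\<close> by simp
    then show "pgds_count S g = (if g \<in> S then pgds_count S g\<^sub>1 else pgds_count S g\<^sub>0)"
      by (simp only: mult_cancel_left of_nat_eq_iff) simp
  qed
  moreover have "real (pgds_count S g\<^sub>1) - real (pgds_count S g\<^sub>0) = \<theta>"
  proof -
    let ?c = "of_nat (card S) ^ 3 - of_real \<theta> * of_nat (card S) :: complex"
    have "?V * of_nat (pgds_count S g\<^sub>1) = ?V * of_real \<theta> + ?c"
      using count[of g\<^sub>1] \<open>g\<^sub>1 \<in> S\<close> by simp
    moreover have "?V * of_nat (pgds_count S g\<^sub>0) = ?c"
      using count[of g\<^sub>0] \<open>g\<^sub>0 \<notin> S\<close> by simp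
    ultimately have "?V * (of_nat (pgds_count S g\<^sub>1) - of_nat (pgds_count S g\<^sub>0)) = ?V * of_real \<theta>"
      by (simp only: right_diff_distrib) simp
    then have "complex_of_real (real (pgds_count S g\<^sub>1) - real (pgds_count S g\<^sub>0)) = of_real \<theta>"
      by simp
    then show ?thesis
      by (simp only: of_real_eq_iff)
  qed
  ultimately show "\<exists>\<alpha> \<beta>. (\<forall>g. pgds_count S g = (if g \<in> S then \<beta> else \<alpha>)) \<and> real \<beta> - real \<alpha> = \<theta>"
    by blast
qed

lemma two_valued_pgds_count_at_zero:
  fixes S :: "('a \<times> 'b) set"
  assumes "\<forall>g. pgds_count S g = (if g \<in> S then \<beta> else \<alpha>)"
  shows "real (card S) ^ 3 = real \<alpha> * real (CARD('a) * CARD('b)) + (real \<beta> - real \<alpha>) * real (card S)"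
proof -
  have "complex_of_real (real (card S) ^ 3)
      = complex_of_real (real \<alpha> * real (CARD('a) * CARD('b)) + (real \<beta> - real \<alpha>) * real (card S))"
    using two_valued_pgds_count_imp_spectrum[OF assms, of 0]
    by (simp add: transform_zero power2_eq_square power3_eq_cube mult.assoc)
  then show ?thesis
    by (simp only: of_real_eq_iff)
qed

end

section \<open>Prime power arithmetic\<close>

lemma prime_power_cofactor:
  fixes p c t :: nat
  assumes "prime p" and "c * t = p ^ (2 * n)" and "c \<le> p ^ n"
  shows "\<exists>s\<le>n. t = p ^ (n + s)"
proof -
  have "p > 1"
    using assms(1) prime_gt_1_nat by blast
  obtain j where "j \<le> 2 * n" and t: "t = p ^ j"
    using assms(1,2) divides_primepow_nat by (metis dvd_triv_right)
  then have "c * p ^ j = p ^ (2 * n - j) * p ^ j"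
    using assms(2) by (simp flip: power_add)
  then have "p ^ (2 * n - j) \<le> p ^ n"
    using assms(3) \<open>p > 1\<close> by simp
  then have "n \<le> j"
    using \<open>p > 1\<close> power_le_imp_le_exp by fastforce
  then show ?thesis
    using \<open>j \<le> 2 * n\<close> t by (intro exI[of _ "j - n"]) auto
qed

lemma powi_diff_of_nat: "(x :: real) \<noteq> 0 \<Longrightarrow> x powi (int a - int b) = x ^ a / x ^ b"
  by (simp add: power_int_diff)

lemma cube_identity_imp_alpha_eq:
  fixes p :: nat and \<alpha> :: real
  assumes "p > 0"
    and "(real p ^ n) ^ 3 = \<alpha> * (real p ^ n * real p ^ m) + real p ^ (n + s) * real p ^ n"
  shows "\<alpha> = real p powi (2 * int n - int m) - real p powi (int n + int s - int m)"
proof -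
  let ?X = "real p"
  have "?X ^ n * (?X ^ n)\<^sup>2 = ?X ^ n * (\<alpha> * ?X ^ m + ?X ^ (n + s))"
    using assms(2) by (simp add: power3_eq_cube power2_eq_square algebra_simps)
  then have "(?X ^ n)\<^sup>2 = \<alpha> * ?X ^ m + ?X ^ (n + s)"
    using assms(1) by (subst (asm) mult_left_cancel) simp_all
  then have "\<alpha> = ((?X ^ n)\<^sup>2 - ?X ^ (n + s)) / ?X ^ m"
    using assms(1) by (simp add: field_simps)
  also have "\<dots> = ?X ^ (2 * n) / ?X ^ m - ?X ^ (n + s) / ?X ^ m"
    by (simp add: diff_divide_distrib power_mult mult.commute)
  also have "\<dots> = ?X powi (2 * int n - int m) - ?X powi (int n + int s - int m)"
    using powi_diff_of_nat[of ?X "2 * n" m] powi_diff_of_nat[of ?X "n + s" m] assms(1) by simp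
  finally show ?thesis .
qed

section \<open>Graphs of functions\<close>

lemma graph_set_eq_range: "graph_set F = range (\<lambda>x. (x, F x))"
  by (auto simp: graph_set_def)

lemma card_graph_set: "card (graph_set (F :: 'a::finite \<Rightarrow> 'b)) = CARD('a)"
  unfolding graph_set_eq_range by (rule card_image) (auto intro: inj_onI)

lemma mult_norm_square_eq_iff:
  fixes z :: complex
  assumes "\<theta> \<ge> 0"
  shows "z * of_real ((cmod z)\<^sup>2) = of_real \<theta> * z \<longleftrightarrow> cmod z \<in> {0, sqrt \<theta>}"
proof (cases "z = 0")
  case False
  then have "z * of_real ((cmod z)\<^sup>2) = of_real \<theta> * z \<longleftrightarrow> (cmod z)\<^sup>2 = \<theta>"
    by (subst mult.commute) (simp only: mult_cancel_right of_real_eq_iff, simp)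
  also have "\<dots> \<longleftrightarrow> cmod z = sqrt \<theta>"
    using assms by (auto simp: real_sqrt_unique)
  finally show ?thesis
    using False by simp
qed simp

context char_pair
begin

lemma transform_graph: "transform (graph_set F) k = (\<Sum>x\<in>UNIV. chi k (x, F x))"
  unfolding transform_def graph_set_eq_range by (simp add: sum.reindex inj_on_def)

lemma transform_graph_vertical:
  "transform (graph_set F) (a, 0) = (if a = 0 then of_nat CARD('a) else 0)"
  by (simp add: transform_graph chi_def add_char_zero[OF char2] sum_add_char_mult[OF char1])

lemma parseval_graph:
  assumes "b \<noteq> 0"
  shows "(\<Sum>a\<in>UNIV. (cmod (transform (graph_set F) (a, b)))\<^sup>2) = real (CARD('a) ^ 2)"
proof -
  let ?T = "\<lambda>a. transform (graph_set F) (a, b)"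
  have chi_graph_diff: "chi (a, b) ((x, F x) - (y, F y)) = \<psi>\<^sub>2 (b * (F x - F y)) * \<psi>\<^sub>1 ((x - y) * a)"
    for a x y
    by (simp add: chi_def mult.commute)
  have "complex_of_real (\<Sum>a\<in>UNIV. (cmod (?T a))\<^sup>2) = (\<Sum>a\<in>UNIV. ?T a * cnj (?T a))"
    by (simp only: of_real_sum complex_norm_square)
  also have "\<dots> = (\<Sum>a\<in>UNIV. \<Sum>x\<in>UNIV. \<Sum>y\<in>UNIV. \<psi>\<^sub>2 (b * (F x - F y)) * \<psi>\<^sub>1 ((x - y) * a))"
    by (simp add: transform_graph cnj_sum sum_product flip: chi_diff chi_graph_diff)
  also have "\<dots> = (\<Sum>x\<in>UNIV. \<Sum>y\<in>UNIV. \<Sum>a\<in>UNIV. \<psi>\<^sub>2 (b * (F x - F y)) * \<psi>\<^sub>1 ((x - y) * a))"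
    by (subst sum.swap) (rule sum.cong[OF refl], rule sum.swap)
  also have "\<dots> = (\<Sum>x\<in>(UNIV :: 'a set). \<Sum>y\<in>UNIV. if y = x then of_nat CARD('a) else (0 :: complex))"
    by (rule sum.cong[OF refl], rule sum.cong[OF refl])
      (simp add: sum_add_char_mult[OF char1] add_char_zero[OF char2] flip: sum_distrib_left)
  also have "\<dots> = of_nat (CARD('a) ^ 2)"
    by (simp add: power2_eq_square)
  finally show ?thesis
    by (metis of_real_eq_iff of_real_of_nat_eq)
qed

lemma graph_spectrum_iff:
  assumes "\<theta> \<ge> 0"
  shows "(\<forall>k\<noteq>0. transform (graph_set F) k * of_real ((cmod (transform (graph_set F) k))\<^sup>2)
      = of_real \<theta> * transform (graph_set F) k)
    \<longleftrightarrow> (\<forall>a b. b \<noteq> 0 \<longrightarrow> cmod (transform (graph_set F) (a, b)) \<in> {0, sqrt \<theta>})"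
    (is "(\<forall>k\<noteq>0. ?spectral k) \<longleftrightarrow> _")
proof (intro iffI allI impI)
  fix a :: 'a and b :: 'b
  assume "\<forall>k\<noteq>0. ?spectral k" and "b \<noteq> 0"
  then have "?spectral (a, b)"
    by (simp add: zero_prod_def)
  then show "cmod (transform (graph_set F) (a, b)) \<in> {0, sqrt \<theta>}"
    by (simp only: mult_norm_square_eq_iff[OF assms])
next
  fix k :: "'a \<times> 'b"
  assume dichotomy: "\<forall>a b. b \<noteq> 0 \<longrightarrow> cmod (transform (graph_set F) (a, b)) \<in> {0, sqrt \<theta>}"
    and "k \<noteq> 0"
  obtain a b where k: "k = (a, b)"
    by fastforce
  show "?spectral k"
  proof (cases "b = 0")
    case True
    then show ?thesis
      using \<open>k \<noteq> 0\<close> k by (simp add: transform_graph_vertical zero_prod_def)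
  next
    case False
    then show ?thesis
      using dichotomy k by (simp only: mult_norm_square_eq_iff[OF assms]) blast
  qed
qed

lemma card_graph_support:
  assumes "\<theta> > 0"
    and spectrum: "\<forall>a b. b \<noteq> 0 \<longrightarrow> cmod (transform (graph_set F) (a, b)) \<in> {0, sqrt \<theta>}"
  shows "real (card {a. transform (graph_set F) (a, 1) \<noteq> 0}) * \<theta> = real (CARD('a) ^ 2)"
proof -
  let ?T = "\<lambda>a. transform (graph_set F) (a, 1)"
  have "(cmod (?T a))\<^sup>2 = (if ?T a \<noteq> 0 then \<theta> else 0)" for a
    using spectrum[rule_format, of 1 a] assms(1) by auto
  then have "(\<Sum>a\<in>UNIV. (cmod (?T a))\<^sup>2) = real (card {a. ?T a \<noteq> 0}) * \<theta>"
    by (simp add: sum.If_cases)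
  then show ?thesis
    using parseval_graph[of 1 F] by simp
qed

lemma graph_two_valued_pgds_count_iff:
  assumes "\<theta> \<ge> 0"
  shows "(\<exists>\<alpha> \<beta>. (\<forall>g. pgds_count (graph_set F) g = (if g \<in> graph_set F then \<beta> else \<alpha>))
      \<and> real \<beta> - real \<alpha> = \<theta>)
    \<longleftrightarrow> (\<forall>a b. b \<noteq> 0 \<longrightarrow> cmod (transform (graph_set F) (a, b)) \<in> {0, sqrt \<theta>})"
proof -
  have "(0, F 0) \<in> graph_set F" and "(0, F 0 + 1) \<notin> graph_set F"
    by (auto simp: graph_set_def)
  then have "graph_set F \<noteq> {}" and "graph_set F \<noteq> UNIV"
    by auto
  then show ?thesis
    by (rule trans[OF two_valued_pgds_count_iff_spectrum graph_spectrum_iff[OF assms]])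
qed

lemma graph_pgds_parameters:
  fixes F :: "'a \<Rightarrow> 'b"
  assumes "prime p" and "CARD('a) = p ^ n" and "CARD('b) = p ^ m"
    and count: "\<forall>g. pgds_count (graph_set F) g = (if g \<in> graph_set F then \<beta> else \<alpha>)"
    and diff: "real \<beta> - real \<alpha> = \<theta>" and "\<theta> > 0"
  shows "\<exists>s\<le>n. \<theta> = real p ^ (n + s)
    \<and> real \<alpha> = real p powi (2 * int n - int m) - real p powi (int n + int s - int m)
    \<and> real \<beta> = real p ^ (n + s) + real p powi (2 * int n - int m) - real p powi (int n + int s - int m)"
proof -
  let ?C = "{a. transform (graph_set F) (a, 1) \<noteq> 0}"
  have "\<forall>a b. b \<noteq> 0 \<longrightarrow> cmod (transform (graph_set F) (a, b)) \<in> {0, sqrt \<theta>}"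
    using count diff by (intro graph_two_valued_pgds_count_iff[THEN iffD1]) (use \<open>\<theta> > 0\<close> in auto)
  then have "real (card ?C) * \<theta> = real (CARD('a) ^ 2)"
    by (rule card_graph_support[OF \<open>\<theta> > 0\<close>])
  have \<theta>: "\<theta> = real (\<beta> - \<alpha>)"
    using diff \<open>\<theta> > 0\<close> by (simp add: of_nat_diff)
  have "real (card ?C * (\<beta> - \<alpha>)) = real (card ?C) * \<theta>"
    using \<theta> by simp
  also have "\<dots> = real (p ^ (2 * n))"
    using \<open>real (card ?C) * \<theta> = real (CARD('a) ^ 2)\<close> assms(2) by (simp add: power_even_eq)
  finally have "card ?C * (\<beta> - \<alpha>) = p ^ (2 * n)"
    by (simp only: of_nat_eq_iff)
  moreover have "card ?C \<le> p ^ n"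
    using assms(2) card_mono[of UNIV ?C] by simp
  ultimately obtain s where "s \<le> n" and "\<beta> - \<alpha> = p ^ (n + s)"
    using prime_power_cofactor[OF assms(1)] by blast
  then have \<theta>_eq: "\<theta> = real p ^ (n + s)"
    using \<theta> by simp
  have "real \<alpha> = real p powi (2 * int n - int m) - real p powi (int n + int s - int m)"
  proof (rule cube_identity_imp_alpha_eq)
    show "p > 0"
      using assms(1) prime_gt_0_nat by blast
    show "(real p ^ n) ^ 3 = real \<alpha> * (real p ^ n * real p ^ m) + real p ^ (n + s) * real p ^ n"
      using two_valued_pgds_count_at_zero[OF count] assms(2,3) diff \<theta>_eq by (simp add: card_graph_set)
  qed
  with \<open>s \<le> n\<close> \<theta>_eq diff show ?thesis
    by auto
qed

end

lemma walsh_eq_transform: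
  fixes F :: "'a::{field,finite} \<Rightarrow> 'b::{field,finite}"
  assumes "char_pair (canonical_add_char p n :: 'a \<Rightarrow> complex) (canonical_add_char p m :: 'b \<Rightarrow> complex)"
  shows "walsh p n m F b a
    = char_pair.transform (canonical_add_char p n) (canonical_add_char p m) (graph_set F) (- a, b)"
proof -
  interpret char_pair "canonical_add_char p n :: 'a \<Rightarrow> complex" "canonical_add_char p m :: 'b \<Rightarrow> complex"
    by (rule assms)
  have "zeta p powi (int (fp_val p (abs_trace p m (b * F x))) - int (fp_val p (abs_trace p n (a * x))))
      = chi (- a, b) (x, F x)" for x
  proof -
    have "zeta p \<noteq> 0"
      using norm_zeta_power[of p 1] by auto
    then have "zeta p powi (int (fp_val p (abs_trace p m (b * F x))) - int (fp_val p (abs_trace p n (a * x))))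
        = canonical_add_char p m (b * F x) / canonical_add_char p n (a * x)"
      by (simp add: power_int_diff canonical_add_char_def)
    also have "\<dots> = chi (- a, b) (x, F x)"
      by (simp add: chi_def divide_inverse add_char_uminus[OF char1] mult.commute)
    finally show ?thesis .
  qed
  then show ?thesis
    by (simp add: walsh_def transform_graph)
qed

theorem mainTheorem1:
  fixes F :: "'a::{field,finite} \<Rightarrow> 'b::{field,finite}"
    and p n m :: nat and \<theta> :: real
  assumes "prime p" and "n > 0" and "m > 0"
    and "CARD('a) = p ^ n" and "CARD('b) = p ^ m"
    and "\<theta> > 0"
    and "p ^ n > 2"
  shows "((\<exists>\<alpha> \<beta>. pgds (graph_set F) (p ^ (n + m)) (p ^ n) \<alpha> \<beta> \<and> real \<beta> - real \<alpha> = \<theta>)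
          \<longleftrightarrow> (\<forall>b::'b. b \<noteq> 0 \<longrightarrow> (\<forall>a::'a. cmod (walsh p n m F b a) \<in> {0, sqrt \<theta>})))
       \<and> (\<forall>\<alpha> \<beta>. pgds (graph_set F) (p ^ (n + m)) (p ^ n) \<alpha> \<beta> \<and> real \<beta> - real \<alpha> = \<theta> \<longrightarrow>
            (\<exists>s::nat. s \<le> n \<and> \<theta> = real p ^ (n + s) \<and>
               real \<alpha> = real p powi (2 * int n - int m) - real p powi (int n + int s - int m) \<and>
               real \<beta> = real p ^ (n + s) + real p powi (2 * int n - int m) - real p powi (int n + int s - int m)))"
proof -
  interpret char_pair "canonical_add_char p n :: 'a \<Rightarrow> complex" "canonical_add_char p m :: 'b \<Rightarrow> complex"
    using assms by (intro char_pair.intro nontrivial_add_char_canonical)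
  let ?G = "graph_set F"
  have "p ^ n < p ^ (n + m)"
    using assms(1,3) prime_gt_1_nat by (simp add: power_strict_increasing)
  then have pgds_iff: "pgds ?G (p ^ (n + m)) (p ^ n) \<alpha> \<beta>
      \<longleftrightarrow> (\<forall>g. pgds_count ?G g = (if g \<in> ?G then \<beta> else \<alpha>))" for \<alpha> \<beta>
    using assms(4,5,7) by (simp add: pgds_iff_pgds_count card_graph_set power_add)
  have "walsh p n m F b a = transform ?G (- a, b)" for a b
    by (rule walsh_eq_transform) unfold_locales
  then have walsh_iff: "(\<forall>b::'b. b \<noteq> 0 \<longrightarrow> (\<forall>a::'a. cmod (walsh p n m F b a) \<in> {0, sqrt \<theta>}))
      \<longleftrightarrow> (\<forall>a b. b \<noteq> 0 \<longrightarrow> cmod (transform ?G (a, b)) \<in> {0, sqrt \<theta>})"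
    by (metis minus_minus)
  have "\<theta> \<ge> 0"
    using assms(6) by simp
  show ?thesis
    unfolding pgds_iff walsh_iff graph_two_valued_pgds_count_iff[OF \<open>\<theta> \<ge> 0\<close>, symmetric]
    using graph_pgds_parameters[OF assms(1,4,5) _ _ assms(6)] by blast
qed

end
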